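(* Let $\Sigma$ be an arcwise connected metric space and $D\subset\Sigma$ an open subset such that $\overline D$ is not arcwise connected and the boundary $\partial D$ consists of exactly two points. Then $\Sigma\setminus D$ is arcwise connected. *)

theory Defs
  imports "HOL-Analysis.Analysis"
begin

definition arcwise_connected :: "'a::topological_space set \<Rightarrow> bool" where
  "arcwise_connected S \<longleftrightarrow>
     (\<forall>x\<in>S. \<forall>y\<in>S. x \<noteq> y \<longrightarrow>
        (\<exists>g. arc g \<and> path_image g \<subseteq> S \<and> pathstart g = x \<and> pathfinish g = y))"

end

theory Submission
  imports Defs
begin

text \<open>If an arc between two points outside \<open>D\<close> entered \<open>D\<close>, the maximal subarc through \<open>D\<close>
  would leave \<open>D\<close> at two distinct frontier points, i.e. at \<open>p\<close> and \<open>q\<close>, and so \<open>p\<close> and \<open>q\<close>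
  would be joined by an arc inside \<open>closure D\<close>. But every point of the proper closed subset
  \<open>closure D\<close> is joined inside it, along an arc of the ambient space stopped at its first exit,
  to its frontier, which lies in \<open>{p, q}\<close>; joining \<open>p\<close> to \<open>q\<close> as well would make
  \<open>closure D\<close> arcwise connected.\<close>

text \<open>The library's \<open>subpath\<close>, without its restriction to normed vector spaces.\<close>

definition tsubpath :: "real \<Rightarrow> real \<Rightarrow> (real \<Rightarrow> 'a) \<Rightarrow> real \<Rightarrow> 'a"
  where "tsubpath u v g = (\<lambda>x. g ((v - u) * x + u))"

lemma pathstart_tsubpath [simp]: "pathstart (tsubpath u v g) = g u"
  by (simp add: tsubpath_def pathstart_def)

lemma pathfinish_tsubpath [simp]: "pathfinish (tsubpath u v g) = g v"
  by (simp add: tsubpath_def pathfinish_def)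

lemma path_image_tsubpath: "path_image (tsubpath u v g) = g ` closed_segment u v"
  unfolding path_image_def tsubpath_def closed_segment_real_eq image_image ..

lemma closed_segment_unit_interval:
  "u \<in> {0..1} \<Longrightarrow> v \<in> {0..1} \<Longrightarrow> closed_segment u v \<subseteq> {0..1::real}"
  by (rule closed_segment_subset) auto

lemma path_image_tsubpath_subset:
  "u \<in> {0..1} \<Longrightarrow> v \<in> {0..1} \<Longrightarrow> path_image (tsubpath u v g) \<subseteq> path_image g"
  unfolding path_image_tsubpath by (simp add: path_image_def image_mono closed_segment_unit_interval)

lemma path_tsubpath:
  assumes "path g" "u \<in> {0..1}" "v \<in> {0..1}"
  shows "path (tsubpath u v g)"
proof -
  have "continuous_on (closed_segment u v) g"
    using assms closed_segment_unit_interval[of u v] continuous_on_subset unfolding path_def by blast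
  then have "continuous_on {0..1} (g \<circ> (\<lambda>x. (v - u) * x + u))"
    by (intro continuous_intros) (simp add: closed_segment_real_eq)
  then show ?thesis
    by (simp add: path_def tsubpath_def o_def)
qed

lemma arc_tsubpath:
  assumes "arc g" "u \<in> {0..1}" "v \<in> {0..1}" "u \<noteq> v"
  shows "arc (tsubpath u v g)"
proof -
  have "inj_on (\<lambda>x. (v - u) * x + u) {0..1}"
    using assms(4) by (auto simp: inj_on_def)
  moreover have "inj_on g ((\<lambda>x. (v - u) * x + u) ` {0..1})"
    using assms arc_imp_inj_on closed_segment_unit_interval inj_on_subset
    unfolding closed_segment_real_eq by metis
  ultimately have "inj_on (tsubpath u v g) {0..1}"
    unfolding tsubpath_def using comp_inj_on[unfolded o_def] by blast
  then show ?thesis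
    using assms arc_imp_path path_tsubpath unfolding arc_def by blast
qed

definition arc_joinable :: "'a::topological_space set \<Rightarrow> 'a \<Rightarrow> 'a \<Rightarrow> bool" where
  "arc_joinable S x y \<longleftrightarrow>
     x = y \<or> (\<exists>g. arc g \<and> path_image g \<subseteq> S \<and> pathstart g = x \<and> pathfinish g = y)"

lemma arc_joinable_refl [simp]: "arc_joinable S x x"
  by (simp add: arc_joinable_def)

lemma arc_joinable_sym: "arc_joinable S x y \<Longrightarrow> arc_joinable S y x"
  unfolding arc_joinable_def by (metis arc_reversepath path_image_reversepath
      pathfinish_reversepath pathstart_reversepath)

lemma arc_joinable_tsubpath:
  assumes "arc g" "u \<in> {0..1}" "v \<in> {0..1}" "g ` closed_segment u v \<subseteq> S"
  shows "arc_joinable S (g u) (g v)"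
proof (cases "u = v")
  case False
  then show ?thesis
    using assms arc_tsubpath[OF assms(1-3)]
    unfolding arc_joinable_def by (metis path_image_tsubpath pathstart_tsubpath pathfinish_tsubpath)
qed simp

lemma arcwise_connected_iff_arc_joinable:
  "arcwise_connected S \<longleftrightarrow> (\<forall>x\<in>S. \<forall>y\<in>S. arc_joinable S x y)"
  unfolding arcwise_connected_def arc_joinable_def by blast

lemma path_first_hitting_time:
  fixes g :: "real \<Rightarrow> 'a::topological_space"
  assumes "path g" "closed K" "pathfinish g \<in> K"
  obtains t where "t \<in> {0..1}" "g t \<in> K" "\<And>s. 0 \<le> s \<Longrightarrow> s < t \<Longrightarrow> g s \<notin> K"
proof -
  define T where "T = {0..1} \<inter> g -` K"
  have "closed T"
    using assms unfolding T_def path_def by (simp add: continuous_closed_preimage)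
  moreover have "1 \<in> T" "bdd_below T"
    using assms(3) by (auto simp: T_def pathfinish_def bdd_below_def)
  ultimately have "Inf T \<in> T"
    using closed_contains_Inf by blast
  moreover have "g s \<notin> K" if "0 \<le> s" "s < Inf T" for s
    using that cInf_lower[OF _ \<open>bdd_below T\<close>, of s] \<open>Inf T \<in> T\<close> by (force simp: T_def)
  ultimately show ?thesis
    using that by (auto simp: T_def)
qed

lemma arc_joinable_trans:
  fixes S :: "'a::t2_space set"
  assumes "arc_joinable S x y" "arc_joinable S y z"
  shows "arc_joinable S x z"
proof (cases "x = y \<or> y = z")
  case True
  then show ?thesis using assms by auto
next
  case False
  obtain A where A: "arc A" "path_image A \<subseteq> S" "pathstart A = x" "pathfinish A = y"
    using assms(1) False by (auto simp: arc_joinable_def)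
  obtain B where B: "arc B" "path_image B \<subseteq> S" "pathstart B = y" "pathfinish B = z"
    using assms(2) False by (auto simp: arc_joinable_def)
  \<comment> \<open>Follow \<open>A\<close> until it first meets \<open>B\<close>, then follow \<open>B\<close>.\<close>
  obtain t where t: "t \<in> {0..1}" "A t \<in> path_image B"
      and before: "\<And>r. 0 \<le> r \<Longrightarrow> r < t \<Longrightarrow> A r \<notin> path_image B"
    using path_first_hitting_time[of A "path_image B"] A B arc_imp_path
    by (metis closed_path_image pathstart_in_path_image)
  obtain s where s: "s \<in> {0..1}" "A t = B s"
    using t(2) by (auto simp: path_image_def)
  have imA: "A ` closed_segment 0 t \<subseteq> S" and imB: "B ` closed_segment s 1 \<subseteq> S"
    using A(2) B(2) t(1) s(1) by (auto simp: path_image_def closed_segment_eq_real_ivl)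
  consider "t = 0" | "s = 1" | "t \<noteq> 0" "s \<noteq> 1" by blast
  then show ?thesis
  proof cases
    case 1
    then show ?thesis
      using arc_joinable_tsubpath[OF B(1) s(1) _ imB] A(3) B(4) s(2)
      by (simp add: pathstart_def pathfinish_def)
  next
    case 2
    then show ?thesis
      using arc_joinable_tsubpath[OF A(1) _ t(1) imA] A(3) B(3) B(4) s(2)
      by (simp add: pathstart_def pathfinish_def)
  next
    case 3
    have meet: "path_image (tsubpath 0 t A) \<inter> path_image (tsubpath s 1 B) \<subseteq> {A t}"
    proof
      fix w assume w: "w \<in> path_image (tsubpath 0 t A) \<inter> path_image (tsubpath s 1 B)"
      then obtain r where r: "0 \<le> r" "r \<le> t" "w = A r"
        using t(1) by (auto simp: path_image_tsubpath closed_segment_eq_real_ivl)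
      have "w \<in> path_image B"
        using w path_image_tsubpath_subset[of s 1 B] s(1) by auto
      then have "r = t"
        using before r by (meson not_le order_antisym)
      then show "w \<in> {A t}"
        using r by simp
    qed
    have "arc (tsubpath 0 t A +++ tsubpath s 1 B)"
      using arc_join[OF arc_tsubpath[OF A(1) _ t(1)] arc_tsubpath[OF B(1) s(1)]] meet 3 s(2)
      by simp
    moreover have "path_image (tsubpath 0 t A +++ tsubpath s 1 B) \<subseteq> S"
      using imA imB path_image_join_subset[of "tsubpath 0 t A" "tsubpath s 1 B"]
      unfolding path_image_tsubpath by blast
    ultimately show ?thesis
      using A(3) B(4) unfolding arc_joinable_def
      by (metis pathstart_join pathfinish_join pathstart_tsubpath pathfinish_tsubpath
          pathstart_def pathfinish_def)
  qed
qed

lemma arcwise_connected_if_arc_joinable_to: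
  fixes S :: "'a::t2_space set"
  assumes "\<And>x. x \<in> S \<Longrightarrow> \<exists>e\<in>E. arc_joinable S x e"
    and "\<And>e e'. e \<in> E \<Longrightarrow> e' \<in> E \<Longrightarrow> arc_joinable S e e'"
  shows "arcwise_connected S"
  unfolding arcwise_connected_iff_arc_joinable
  by (meson assms arc_joinable_sym arc_joinable_trans)

lemma path_exits_through_frontier:
  fixes g :: "real \<Rightarrow> 'a::metric_space"
  assumes "path g" "t \<in> {0..1}" "g t \<in> closure S" "g 1 \<notin> S"
  obtains b where "t \<le> b" "b \<le> 1" "g b \<in> frontier S" "g ` {t..<b} \<subseteq> interior S"
proof -
  have "path (tsubpath t 1 g)" and "pathfinish (tsubpath t 1 g) \<notin> S"
    using assms path_tsubpath[of g t 1] by auto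
  then obtain u where u: "0 \<le> u" "u \<le> 1"
      "\<And>x. 0 \<le> x \<and> x < u \<Longrightarrow> tsubpath t 1 g x \<in> interior S"
      "tsubpath t 1 g u \<notin> interior S" "u = 0 \<or> tsubpath t 1 g u \<in> closure S"
    using subpath_to_frontier_explicit by metis
  define b where "b = (1 - t) * u + t"
  have gb: "g b = tsubpath t 1 g u"
    by (simp add: tsubpath_def b_def)
  have "(1 - t) * u \<le> 1 - t"
    using assms(2) u(2) by (simp add: mult_left_le)
  then have tb: "t \<le> b" "b \<le> 1"
    using assms(2) u(1) by (auto simp: b_def)
  have "g b \<in> frontier S"
    using u(4,5) assms(3) by (auto simp: gb frontier_def tsubpath_def)
  moreover have "g s \<in> interior S" if s: "t \<le> s" "s < b" for s
  proof -
    have "t < 1"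
      using s tb by linarith
    define x where "x = (s - t) / (1 - t)"
    have "s - t < (1 - t) * u"
      using s(2) by (simp add: b_def)
    then have "0 \<le> x \<and> x < u"
      using s(1) \<open>t < 1\<close> by (simp add: x_def divide_less_eq mult.commute)
    moreover have "tsubpath t 1 g x = g s"
      using \<open>t < 1\<close> by (simp add: tsubpath_def x_def)
    ultimately show ?thesis
      using u(3)[of x] by simp
  qed
  ultimately show ?thesis
    using that tb by (meson atLeastLessThan_iff image_subsetI)
qed

lemma arc_joinable_to_frontier:
  fixes P :: "'a::metric_space set"
  assumes "arcwise_connected (UNIV :: 'a set)" "closed P" "P \<noteq> UNIV" "w \<in> P"
  obtains e where "e \<in> frontier P" "arc_joinable P w e"
proof -
  obtain z where "z \<notin> P"
    using assms(3) by blast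
  then obtain g where g: "arc g" "pathstart g = w" "pathfinish g = z"
    using assms(1,4) unfolding arcwise_connected_def by (metis UNIV_I)
  then obtain b where b: "0 \<le> b" "b \<le> 1" "g b \<in> frontier P" "g ` {0..<b} \<subseteq> interior P"
    using path_exits_through_frontier[of g 0 P] assms(4) \<open>z \<notin> P\<close> closure_subset
    by (auto simp: arc_imp_path pathstart_def pathfinish_def)
  have "g s \<in> P" if "0 \<le> s" "s \<le> b" for s
  proof (cases "s = b")
    case True
    then show ?thesis
      using b(3) assms(2) frontier_subset_closed by blast
  next
    case False
    then show ?thesis
      using that b(4) interior_subset by fastforce
  qed
  then have "g ` closed_segment 0 b \<subseteq> P"
    using b(1) by (auto simp: closed_segment_eq_real_ivl)
  with g(1) b(1,2) have "arc_joinable P (g 0) (g b)"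
    by (intro arc_joinable_tsubpath) auto
  then show ?thesis
    using that b(3) g(2) by (auto simp: pathstart_def)
qed

lemma arc_through_open_set_joins_frontier:
  fixes D :: "'a::metric_space set"
  assumes "open D" "arc \<gamma>" "pathstart \<gamma> \<notin> D" "pathfinish \<gamma> \<notin> D" "\<not> path_image \<gamma> \<subseteq> - D"
  obtains e e' where "e \<noteq> e'" "e \<in> frontier D" "e' \<in> frontier D" "arc_joinable (closure D) e e'"
proof -
  have p: "path \<gamma>"
    using assms(2) arc_imp_path by blast
  obtain t where t: "t \<in> {0..1}" "\<gamma> t \<in> D"
    using assms(5) unfolding path_image_def by blast
  have "\<gamma> t \<in> closure D"
    using t(2) closure_subset by blast
  then obtain b where b: "t \<le> b" "b \<le> 1" "\<gamma> b \<in> frontier D" "\<gamma> ` {t..<b} \<subseteq> D"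
    using path_exits_through_frontier[OF p t(1)] assms(1,4)
    by (metis interior_open pathfinish_def)
  have "reversepath \<gamma> (1 - t) \<in> closure D" "reversepath \<gamma> 1 \<notin> D"
    using \<open>\<gamma> t \<in> closure D\<close> assms(3) by (simp_all add: reversepath_def pathstart_def)
  then obtain b' where b': "1 - t \<le> b'" "b' \<le> 1" "reversepath \<gamma> b' \<in> frontier D"
      "reversepath \<gamma> ` {1 - t..<b'} \<subseteq> D"
    using path_exits_through_frontier[of "reversepath \<gamma>" "1 - t" D] p t(1) assms(1)
    by (auto simp: interior_open)
  define a where "a = 1 - b'"
  have a: "0 \<le> a" "a \<le> t" "\<gamma> a \<in> frontier D"
    using b' by (simp_all add: a_def reversepath_def)
  have before_t: "\<gamma> s \<in> D" if "a < s" "s \<le> t" for s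
  proof -
    have "1 - s \<in> {1 - t..<b'}"
      using that by (simp add: a_def)
    then have "reversepath \<gamma> (1 - s) \<in> D"
      using b'(4) by blast
    then show ?thesis
      by (simp add: reversepath_def)
  qed
  have inside: "\<gamma> s \<in> D" if "a < s" "s < b" for s
    using that before_t b(4) by (cases "s \<le> t") auto
  have "\<gamma> s \<in> closure D" if "a \<le> s" "s \<le> b" for s
    using that inside[of s] a(3) b(3) closure_subset
    by (cases "s = a \<or> s = b") (auto simp: frontier_def)
  then have image: "\<gamma> ` closed_segment a b \<subseteq> closure D"
    using a(2) b(1) by (auto simp: closed_segment_eq_real_ivl)
  have "a \<noteq> b"
    using a b t(2) assms(1) frontier_disjoint_eq[of D] by force
  then have "\<gamma> a \<noteq> \<gamma> b"
    using a b t(1) inj_onD[OF arc_imp_inj_on[OF assms(2)]] by force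
  moreover have "arc_joinable (closure D) (\<gamma> a) (\<gamma> b)"
    using arc_joinable_tsubpath[OF assms(2) _ _ image] a b t(1) by simp
  ultimately show ?thesis
    using that a(3) b(3) by blast
qed

theorem mainTheorem10:
  fixes D :: "'a::metric_space set"
  assumes "arcwise_connected (UNIV :: 'a set)"
    and "open D"
    and "\<not> arcwise_connected (closure D)"
    and "\<exists>p q. p \<noteq> q \<and> frontier D = {p, q}"
  shows "arcwise_connected (UNIV - D)"
proof -
  obtain p q where pq: "p \<noteq> q" "frontier D = {p, q}"
    using assms(4) by blast
  have "closure D \<noteq> UNIV"
    using assms(1,3) by auto
  have not_joinable: "\<not> arc_joinable (closure D) p q"
  proof
    assume "arc_joinable (closure D) p q"
    then have "\<And>e e'. e \<in> {p, q} \<Longrightarrow> e' \<in> {p, q} \<Longrightarrow> arc_joinable (closure D) e e'"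
      using arc_joinable_sym by auto
    moreover have "frontier (closure D) \<subseteq> {p, q}"
      using pq(2) interior_mono[OF closure_subset[of D]] by (auto simp: frontier_def)
    then have "\<And>x. x \<in> closure D \<Longrightarrow> \<exists>e\<in>{p, q}. arc_joinable (closure D) x e"
      using arc_joinable_to_frontier[OF assms(1) closed_closure \<open>closure D \<noteq> UNIV\<close>] by blast
    ultimately show False
      using assms(3) arcwise_connected_if_arc_joinable_to by blast
  qed
  show ?thesis
    unfolding arcwise_connected_def
  proof (intro ballI impI)
    fix x y assume x: "x \<in> UNIV - D" and y: "y \<in> UNIV - D" and "x \<noteq> y"
    then obtain \<gamma> where \<gamma>: "arc \<gamma>" "pathstart \<gamma> = x" "pathfinish \<gamma> = y"
      using assms(1) unfolding arcwise_connected_def by blast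
    have "path_image \<gamma> \<subseteq> - D"
    proof (rule ccontr)
      assume "\<not> path_image \<gamma> \<subseteq> - D"
      then obtain e e' where "e \<noteq> e'" "e \<in> {p, q}" "e' \<in> {p, q}" "arc_joinable (closure D) e e'"
        using arc_through_open_set_joins_frontier[OF assms(2) \<gamma>(1)] \<gamma>(2,3) pq(2) x y by auto
      then show False
        using not_joinable arc_joinable_sym by auto
    qed
    then show "\<exists>g. arc g \<and> path_image g \<subseteq> UNIV - D \<and> pathstart g = x \<and> pathfinish g = y"
      using \<gamma> by blast
  qed
qed

end
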